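(* Let $S$ be a $1$-synchronizable system. Let $a_1,\dots,a_n,b_1,\dots,b_m\in\Sigma_M$ and $\tau\in T_0(S)$ be such that $\tau\cdot !a_1\cdots !a_n\in T_n(S)$, $\tau\cdot !b_1\cdots !b_m\in T_m(S)$, and $\mathrm{src}(a_i)\neq\mathrm{src}(b_j)$ for all $i\in\{1,\dots,n\}$, $j\in\{1,\dots,m\}$. Then for any two different shuffles $\xi_1,\xi_2$ of the action sequence $!?a_1\cdots !?a_n$ with the action sequence $!?b_1\cdots !?b_m$, it holds that $\tau\cdot\xi_1\in T_\omega(S)$, $\tau\cdot\xi_2\in T_\omega(S)$, and $\tau\cdot\xi_1\equiv_S\tau\cdot\xi_2$.
   Context: A message set $M=(\Sigma_M,N,\mathrm{src},\mathrm{dst})$: finite set of messages, $N\ge1$ peers, $\mathrm{src}(a)\neq\mathrm{dst}(a)\in\{1,\dots,N\}$. Actions $!a$ (by peer $\mathrm{src}(a)$), $?a$ (by peer $\mathrm{dst}(a)$); traces are finite action sequences; $!?a$ abbreviates $!a\cdot?a$. For a trace $\tau$, $\pi_!(\tau)$ is the sequence of sent messages; $\mathrm{buf}_{i\to j}(\tau)$ is the word $w$ (if any) with (sent on $i\to j$) $=$ (received on $i\to j$)$\cdot w$. $\tau$ is FIFO ($k$-bounded FIFO) if for all $i,j$ and prefixes $\tau'$, $\mathrm{buf}_{i\to j}(\tau')$ is defined (and has length $\le k$); synchronous if of the form $!?a_1\cdots!?a_k$. A system $S=(P_1,\dots,P_N)$: finite automata $P_i$ (all states accepting) over actions of peer $i$,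 with one FIFO channel per ordered pair $i\neq j$. A configuration: one control state per peer and contents $w_{i,j}$ of channels; stable if all channels empty. $!a$ ($\mathrm{src}(a)=i,\mathrm{dst}(a)=j$) moves $P_i$ and appends $a$ to $w_{i,j}$; $?a$ moves $P_j$ and removes $a$ from the head of $w_{i,j}$; $c_0$ is the initial configuration. $T_k(S)$ ($k\ge1$): $k$-bounded FIFO traces $\tau$ with $c_0\xrightarrow{\tau}c$ for some $c$; $T_0(S)$: synchronous such traces; $T_\omega(S)=\bigcup_kT_k(S)$. $\tau_1\equiv_S\tau_2$ iff $\tau_1,\tau_2\in T_\omega(S)$ and there is $c$ with $c_0\xrightarrow{\tau_1}c$ and $c_0\xrightarrow{\tau_2}c$. $ST_k(S)=\{\pi_!(\tau)\mid\tau\in T_k(S)\}\cup\{(\pi_!(\tau),c)\mid c_0\xrightarrow{\tau}c,\ c\text{ stable},\ \tau\in T_k(S)\}$; $S$ is $1$-synchronizable if $ST_0(S)=ST_1(S)$. *)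

theory Defs
  imports Main "HOL-Library.Sublist"
begin

datatype 'm action = Send 'm | Recv 'm

text \<open>A system bundles the message set M = (Sigma_M, N, src, dst) together with
  the peers P_1..P_N (finite automata, all states accepting, so only states,
  initial state and transitions are recorded).\<close>

record ('m, 's) sys =
  msgs   :: "'m set"
  npeers :: nat
  src    :: "'m \<Rightarrow> nat"
  dst    :: "'m \<Rightarrow> nat"
  states :: "nat \<Rightarrow> 's set"
  init   :: "nat \<Rightarrow> 's"
  trans  :: "nat \<Rightarrow> ('s \<times> 'm action \<times> 's) set"

definition peer_of :: "('m, 's) sys \<Rightarrow> 'm action \<Rightarrow> nat" where
  "peer_of S act = (case act of Send a \<Rightarrow> src S a | Recv a \<Rightarrow> dst S a)"

definition msg_of :: "'m action \<Rightarrow> 'm" where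
  "msg_of act = (case act of Send a \<Rightarrow> a | Recv a \<Rightarrow> a)"

definition wf_sys :: "('m, 's) sys \<Rightarrow> bool" where
  "wf_sys S \<longleftrightarrow>
     npeers S \<ge> 1 \<and> finite (msgs S) \<and>
     (\<forall>a\<in>msgs S. src S a \<in> {1..npeers S} \<and> dst S a \<in> {1..npeers S} \<and> src S a \<noteq> dst S a) \<and>
     (\<forall>i\<in>{1..npeers S}. finite (states S i) \<and> init S i \<in> states S i \<and>
        (\<forall>(q, act, q') \<in> trans S i. q \<in> states S i \<and> q' \<in> states S i \<and>
            msg_of act \<in> msgs S \<and> peer_of S act = i))"

text \<open>Configurations: control state of each peer, and content w i j of channel i -> j.\<close>
type_synonym ('m, 's) config = "(nat \<Rightarrow> 's) \<times> (nat \<Rightarrow> nat \<Rightarrow> 'm list)"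

definition c0 :: "('m, 's) sys \<Rightarrow> ('m, 's) config" where
  "c0 S = (init S, \<lambda>i j. [])"

definition stable :: "('m, 's) config \<Rightarrow> bool" where
  "stable c \<longleftrightarrow> (\<forall>i j. snd c i j = [])"

inductive step :: "('m, 's) sys \<Rightarrow> ('m, 's) config \<Rightarrow> 'm action \<Rightarrow> ('m, 's) config \<Rightarrow> bool"
  for S where
  send: "\<lbrakk> a \<in> msgs S; i = src S a; j = dst S a; (q i, Send a, p) \<in> trans S i \<rbrakk>
         \<Longrightarrow> step S (q, w) (Send a) (q(i := p), w(i := (w i)(j := w i j @ [a])))"
| recv: "\<lbrakk> a \<in> msgs S; i = src S a; j = dst S a; w i j = a # rest; (q j, Recv a, p) \<in> trans S j \<rbrakk>
         \<Longrightarrow> step S (q, w) (Recv a) (q(j := p), w(i := (w i)(j := rest)))"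

inductive run :: "('m, 's) sys \<Rightarrow> ('m, 's) config \<Rightarrow> 'm action list \<Rightarrow> ('m, 's) config \<Rightarrow> bool"
  for S where
  nil:  "run S c [] c"
| cons: "\<lbrakk> step S c act c'; run S c' tau c'' \<rbrakk> \<Longrightarrow> run S c (act # tau) c''"

definition sends :: "'m action list \<Rightarrow> 'm list" where
  "sends tau = concat (map (\<lambda>act. case act of Send a \<Rightarrow> [a] | Recv a \<Rightarrow> []) tau)"

definition recvs :: "'m action list \<Rightarrow> 'm list" where
  "recvs tau = concat (map (\<lambda>act. case act of Send a \<Rightarrow> [] | Recv a \<Rightarrow> [a]) tau)"

definition sent_on :: "('m, 's) sys \<Rightarrow> nat \<Rightarrow> nat \<Rightarrow> 'm action list \<Rightarrow> 'm list" where
  "sent_on S i j tau = filter (\<lambda>a. src S a = i \<and> dst S a = j) (sends tau)"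

definition recv_on :: "('m, 's) sys \<Rightarrow> nat \<Rightarrow> nat \<Rightarrow> 'm action list \<Rightarrow> 'm list" where
  "recv_on S i j tau = filter (\<lambda>a. src S a = i \<and> dst S a = j) (recvs tau)"

definition buf :: "('m, 's) sys \<Rightarrow> nat \<Rightarrow> nat \<Rightarrow> 'm action list \<Rightarrow> 'm list option" where
  "buf S i j tau =
     (if prefix (recv_on S i j tau) (sent_on S i j tau)
      then Some (drop (length (recv_on S i j tau)) (sent_on S i j tau)) else None)"

definition kfifo :: "('m, 's) sys \<Rightarrow> nat \<Rightarrow> 'm action list \<Rightarrow> bool" where
  "kfifo S k tau \<longleftrightarrow>
     (\<forall>tau'. prefix tau' tau \<longrightarrow>
        (\<forall>i\<in>{1..npeers S}. \<forall>j\<in>{1..npeers S}. i \<noteq> j \<longrightarrow>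
           (\<exists>w. buf S i j tau' = Some w \<and> length w \<le> k)))"

text \<open>!?a abbreviates !a . ?a\<close>
definition sync_word :: "'m list \<Rightarrow> 'm action list" where
  "sync_word as = concat (map (\<lambda>a. [Send a, Recv a]) as)"

definition synchronous :: "'m action list \<Rightarrow> bool" where
  "synchronous tau \<longleftrightarrow> (\<exists>as. tau = sync_word as)"

definition T :: "('m, 's) sys \<Rightarrow> nat \<Rightarrow> 'm action list set" where
  "T S k = (if k = 0 then {tau. synchronous tau \<and> (\<exists>c. run S (c0 S) tau c)}
            else {tau. kfifo S k tau \<and> (\<exists>c. run S (c0 S) tau c)})"

definition T_omega :: "('m, 's) sys \<Rightarrow> 'm action list set" where
  "T_omega S = (\<Union>k. T S k)"

definition trace_equiv :: "('m, 's) sys \<Rightarrow> 'm action list \<Rightarrow> 'm action list \<Rightarrow> bool" where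
  "trace_equiv S t1 t2 \<longleftrightarrow> t1 \<in> T_omega S \<and> t2 \<in> T_omega S \<and>
      (\<exists>c. run S (c0 S) t1 c \<and> run S (c0 S) t2 c)"

text \<open>ST_k(S): send projections of T_k traces (Inl), plus pairs of send projection and
  reached stable configuration (Inr).\<close>
definition ST :: "('m, 's) sys \<Rightarrow> nat \<Rightarrow> ('m list + ('m list \<times> ('m, 's) config)) set" where
  "ST S k = {Inl (sends tau) | tau. tau \<in> T S k}
          \<union> {Inr (sends tau, c) | tau c. run S (c0 S) tau c \<and> stable c \<and> tau \<in> T S k}"

definition one_synchronizable :: "('m, 's) sys \<Rightarrow> bool" where
  "one_synchronizable S \<longleftrightarrow> ST S 0 = ST S 1"

end

theory Submission
  imports Defs
begin

text \<open>A run of the system is the same as a family of independent runs of the FIFO channels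
  and of the peer automata, so a configuration is determined by the projections of a trace onto
  channels and peers. Since no peer sends messages of both \<open>as\<close> and \<open>bs\<close>, every
  interleaving \<open>\<xi>\<close> of the synchronous exchanges leaves a synchronous word on every channel,
  and a peer only sees its own sends (all from one of the two lists) interleaved with receipts.
  For a peer \<open>i\<close> sending nothing in \<open>bs\<close>, every local state reachable after
  \<open>\<tau>\<cdot>(as @ bs)\<close> stays reachable after any interleaving: an adjacent pair of exchanges
  \<open>b, a\<close> can be swapped by looking at the 1-bounded trace in which the receipt of \<open>b\<close> is
  delayed past the exchange of \<open>a\<close>; it ends in a stable configuration, which
  1-synchronizability transfers to the synchronous order. Picking one such state per peer gives
  a single stable configuration reached by all interleavings. That the interleavings are
  executable at all follows from the fact that in a 1-synchronizable system a synchronous trace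
  followed by executable sends can be followed by the corresponding synchronous exchanges.\<close>

section \<open>Runs as products of channels and peers\<close>

lemma msg_of_simps [simp]: "msg_of (Send a) = a" "msg_of (Recv a) = a"
  by (simp_all add: msg_of_def)

lemma peer_of_simps [simp]: "peer_of S (Send a) = src S a" "peer_of S (Recv a) = dst S a"
  by (simp_all add: peer_of_def)

definition on_channel :: "('m, 's) sys \<Rightarrow> nat \<Rightarrow> nat \<Rightarrow> 'm action \<Rightarrow> bool" where
  "on_channel S i j act \<longleftrightarrow> src S (msg_of act) = i \<and> dst S (msg_of act) = j"

lemma on_channel_simps [simp]:
  "on_channel S i j (Send a) \<longleftrightarrow> src S a = i \<and> dst S a = j"
  "on_channel S i j (Recv a) \<longleftrightarrow> src S a = i \<and> dst S a = j"
  by (simp_all add: on_channel_def)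

definition peer_trace :: "('m, 's) sys \<Rightarrow> nat \<Rightarrow> 'm action list \<Rightarrow> 'm action list" where
  "peer_trace S i t = filter (\<lambda>act. peer_of S act = i) t"

lemma peer_trace_simps [simp]:
  "peer_trace S i [] = []"
  "peer_trace S i (act # t) = (if peer_of S act = i then act # peer_trace S i t else peer_trace S i t)"
  "peer_trace S i (t1 @ t2) = peer_trace S i t1 @ peer_trace S i t2"
  by (simp_all add: peer_trace_def)

fun chan_run :: "'m list \<Rightarrow> 'm action list \<Rightarrow> 'm list option" where
  "chan_run q [] = Some q"
| "chan_run q (Send a # t) = chan_run (q @ [a]) t"
| "chan_run q (Recv a # t) =
     (case q of [] \<Rightarrow> None | b # q' \<Rightarrow> if b = a then chan_run q' t else None)"

lemma chan_run_append: "chan_run q (t1 @ t2) = Option.bind (chan_run q t1) (\<lambda>q'. chan_run q' t2)"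
  by (induction q t1 rule: chan_run.induct) (auto split: list.split)

inductive peer_run :: "('m, 's) sys \<Rightarrow> nat \<Rightarrow> 's \<Rightarrow> 'm action list \<Rightarrow> 's \<Rightarrow> bool"
  for S i where
  Nil: "peer_run S i q [] q"
| Cons: "(q, act, q') \<in> trans S i \<Longrightarrow> peer_run S i q' w q'' \<Longrightarrow> peer_run S i q (act # w) q''"

lemma peer_run_Nil_iff [simp]: "peer_run S i q [] q' \<longleftrightarrow> q' = q"
  by (auto intro: peer_run.Nil elim: peer_run.cases)

lemma peer_run_Cons_iff [simp]:
  "peer_run S i q (act # w) q'' \<longleftrightarrow> (\<exists>q'. (q, act, q') \<in> trans S i \<and> peer_run S i q' w q'')"
  by (auto intro: peer_run.Cons elim: peer_run.cases)

lemma peer_run_append: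
  "peer_run S i q (w1 @ w2) q'' \<longleftrightarrow> (\<exists>q'. peer_run S i q w1 q' \<and> peer_run S i q' w2 q'')"
  by (induction w1 arbitrary: q) auto

lemma run_Nil_iff [simp]: "run S c [] c' \<longleftrightarrow> c' = c"
  by (auto intro: run.nil elim: run.cases)

lemma run_Cons_iff: "run S c (act # t) c'' \<longleftrightarrow> (\<exists>c'. step S c act c' \<and> run S c' t c'')"
  by (blast intro: run.cons elim: run.cases)

lemma run_append: "run S c (t1 @ t2) c'' \<longleftrightarrow> (\<exists>c'. run S c t1 c' \<and> run S c' t2 c'')"
  by (induction t1 arbitrary: c) (auto simp: run_Cons_iff)

lemma step_pointwise_iff:
  fixes S :: "('m, 's) sys" and act :: "'m action"
  defines "p \<equiv> peer_of S act" and "i0 \<equiv> src S (msg_of act)" and "j0 \<equiv> dst S (msg_of act)"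
  shows "step S (q, w) act (q', w') \<longleftrightarrow>
     msg_of act \<in> msgs S \<and> (q p, act, q' p) \<in> trans S p \<and> (\<forall>i. i \<noteq> p \<longrightarrow> q' i = q i) \<and>
     chan_run (w i0 j0) [act] = Some (w' i0 j0) \<and> (\<forall>i j. (i, j) \<noteq> (i0, j0) \<longrightarrow> w' i j = w i j)"
    (is "_ \<longleftrightarrow> ?msg \<and> ?tr \<and> ?q \<and> ?ch \<and> ?w")
proof
  assume "step S (q, w) act (q', w')"
  then show "?msg \<and> ?tr \<and> ?q \<and> ?ch \<and> ?w"
    unfolding p_def i0_def j0_def by (cases rule: step.cases) auto
next
  assume H: "?msg \<and> ?tr \<and> ?q \<and> ?ch \<and> ?w"
  then have q': "q(p := q' p) = q'"
    by (simp add: fun_eq_iff)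
  show "step S (q, w) act (q', w')"
  proof (cases act)
    case (Send a)
    with H have "w(i0 := (w i0)(j0 := w i0 j0 @ [a])) = w'"
      by (simp add: fun_eq_iff)
    moreover have "step S (q, w) act (q(p := q' p), w(i0 := (w i0)(j0 := w i0 j0 @ [a])))"
      using H unfolding Send p_def i0_def j0_def msg_of_simps peer_of_simps by (intro step.send) simp_all
    ultimately show ?thesis
      by (simp only: q')
  next
    case (Recv a)
    with H obtain rest where "w i0 j0 = a # rest" "w(i0 := (w i0)(j0 := rest)) = w'"
      by (auto simp: fun_eq_iff split: list.splits if_splits)
    moreover from this(1) have "step S (q, w) act (q(p := q' p), w(i0 := (w i0)(j0 := rest)))"
      using H unfolding Recv p_def i0_def j0_def msg_of_simps peer_of_simps by (intro step.recv) simp_all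
    ultimately show ?thesis
      by (simp only: q')
  qed
qed

lemma step_iff_channels_peers:
  "step S (q, w) act (q', w') \<longleftrightarrow>
     msg_of act \<in> msgs S \<and>
     (\<forall>i j. chan_run (w i j) (filter (on_channel S i j) [act]) = Some (w' i j)) \<and>
     (\<forall>i. peer_run S i (q i) (peer_trace S i [act]) (q' i))"
  unfolding step_pointwise_iff on_channel_def by (auto 0 3 split: if_splits)

lemma run_iff_channels_peers:
  "run S (q, w) t (q', w') \<longleftrightarrow>
     (\<forall>act\<in>set t. msg_of act \<in> msgs S) \<and>
     (\<forall>i j. chan_run (w i j) (filter (on_channel S i j) t) = Some (w' i j)) \<and>
     (\<forall>i. peer_run S i (q i) (peer_trace S i t) (q' i))"
proof (induction t arbitrary: q w)
  case (Cons act t)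
  have "run S (q, w) (act # t) (q', w') \<longleftrightarrow>
      (\<exists>q1 w1. step S (q, w) act (q1, w1) \<and> run S (q1, w1) t (q', w'))"
    by (auto simp: run_Cons_iff)
  also have "\<dots> \<longleftrightarrow> (\<forall>act'\<in>set (act # t). msg_of act' \<in> msgs S) \<and>
      (\<forall>i j. \<exists>m. chan_run (w i j) (filter (on_channel S i j) [act]) = Some m \<and>
                 chan_run m (filter (on_channel S i j) t) = Some (w' i j)) \<and>
      (\<forall>i. \<exists>m. peer_run S i (q i) (peer_trace S i [act]) m \<and> peer_run S i m (peer_trace S i t) (q' i))"
    (is "_ \<longleftrightarrow> ?msgs \<and> (\<forall>i j. \<exists>m. ?chans i j m) \<and> (\<forall>i. \<exists>m. ?peers i m)")
  proof
    assume "\<exists>q1 w1. step S (q, w) act (q1, w1) \<and> run S (q1, w1) t (q', w')"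
    then show "?msgs \<and> (\<forall>i j. \<exists>m. ?chans i j m) \<and> (\<forall>i. \<exists>m. ?peers i m)"
      unfolding step_iff_channels_peers Cons.IH list.set ball_simps(7) by blast
  next
    assume "?msgs \<and> (\<forall>i j. \<exists>m. ?chans i j m) \<and> (\<forall>i. \<exists>m. ?peers i m)"
    moreover from this obtain w1 q1 where "\<forall>i j. ?chans i j (w1 i j)" "\<forall>i. ?peers i (q1 i)"
      by metis
    ultimately show "\<exists>q1 w1. step S (q, w) act (q1, w1) \<and> run S (q1, w1) t (q', w')"
      unfolding step_iff_channels_peers Cons.IH list.set ball_simps(7) by blast
  qed
  also have "\<dots> \<longleftrightarrow> (\<forall>act'\<in>set (act # t). msg_of act' \<in> msgs S) \<and>
      (\<forall>i j. chan_run (w i j) (filter (on_channel S i j) (act # t)) = Some (w' i j)) \<and>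
      (\<forall>i. peer_run S i (q i) (peer_trace S i (act # t)) (q' i))"
  proof -
    have "filter P (act # t) = filter P [act] @ filter P t" for P
      by simp
    moreover have "peer_trace S i (act # t) = peer_trace S i [act] @ peer_trace S i t" for i
      by simp
    ultimately show ?thesis
      by (simp only: chan_run_append peer_run_append bind_eq_Some_conv)
  qed
  finally show ?case .
qed (auto simp: fun_eq_iff)

section \<open>Channel shapes and bounded traces\<close>

lemma sync_word_simps [simp]:
  "sync_word [] = []"
  "sync_word (m # ms) = Send m # Recv m # sync_word ms"
  "sync_word (ms @ ms') = sync_word ms @ sync_word ms'"
  by (simp_all add: sync_word_def)

lemma sends_simps [simp]:
  "sends [] = []" "sends (Send a # t) = a # sends t" "sends (Recv a # t) = sends t"
  "sends (t1 @ t2) = sends t1 @ sends t2"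
  by (simp_all add: sends_def)

lemma recvs_simps [simp]:
  "recvs [] = []" "recvs (Send a # t) = recvs t" "recvs (Recv a # t) = a # recvs t"
  "recvs (t1 @ t2) = recvs t1 @ recvs t2"
  by (simp_all add: recvs_def)

lemma sends_sync_word [simp]: "sends (sync_word ms) = ms"
  by (induction ms) auto

lemma sends_map_Send [simp]: "sends (map Send ms) = ms"
  by (induction ms) auto

lemma recvs_map_Send [simp]: "recvs (map Send ms) = []"
  by (induction ms) auto

lemma set_sync_word [simp]: "set (sync_word ms) = Send ` set ms \<union> Recv ` set ms"
  by (induction ms) auto

lemma filter_on_channel_sync_word:
  "filter (on_channel S i j) (sync_word ms) = sync_word (filter (\<lambda>m. src S m = i \<and> dst S m = j) ms)"
  by (induction ms) auto

lemma filter_on_channel_map_Send: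
  "filter (on_channel S i j) (map Send ms) = map Send (filter (\<lambda>m. src S m = i \<and> dst S m = j) ms)"
  by (induction ms) auto

lemma peer_trace_map_Send: "peer_trace S i (map Send ms) = map Send (filter (\<lambda>m. src S m = i) ms)"
  by (induction ms) auto

lemma sends_filter_on_channel:
  "sends (filter (on_channel S i j) t) = filter (\<lambda>a. src S a = i \<and> dst S a = j) (sends t)"
proof (induction t)
  case (Cons act t)
  then show ?case by (cases act) auto
qed simp

lemma recvs_filter_on_channel:
  "recvs (filter (on_channel S i j) t) = filter (\<lambda>a. src S a = i \<and> dst S a = j) (recvs t)"
proof (induction t)
  case (Cons act t)
  then show ?case by (cases act) auto
qed simp

definition executable :: "('m, 's) sys \<Rightarrow> 'm action list \<Rightarrow> bool" where
  "executable S t \<longleftrightarrow> (\<exists>c. run S (c0 S) t c)"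

definition local_states :: "('m, 's) sys \<Rightarrow> nat \<Rightarrow> 'm action list \<Rightarrow> 's set" where
  "local_states S i t = {st. peer_run S i (init S i) (peer_trace S i t) st}"

lemma run_c0_iff:
  "run S (c0 S) t (q, w) \<longleftrightarrow>
     (\<forall>act\<in>set t. msg_of act \<in> msgs S) \<and>
     (\<forall>i j. chan_run [] (filter (on_channel S i j) t) = Some (w i j)) \<and>
     (\<forall>i. q i \<in> local_states S i t)"
  by (simp add: c0_def run_iff_channels_peers local_states_def)

lemma executable_msgs: "executable S t \<Longrightarrow> \<forall>act\<in>set t. msg_of act \<in> msgs S"
  by (auto simp: executable_def run_c0_iff)

lemma executable_local_states: "executable S t \<Longrightarrow> local_states S i t \<noteq> {}"
  by (auto simp: executable_def run_c0_iff)

lemma executable_appendD: "executable S (t1 @ t2) \<Longrightarrow> executable S t1"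
  by (auto simp: executable_def run_append)

lemma T_executable: "t \<in> T S k \<Longrightarrow> executable S t"
  by (simp add: T_def executable_def split: if_splits)

lemma T0_sync_word: "t \<in> T S 0 \<Longrightarrow> t = sync_word (sends t)"
  by (auto simp: T_def synchronous_def)

definition sync_then_sends :: "('m, 's) sys \<Rightarrow> nat \<Rightarrow> 'm action list \<Rightarrow> bool" where
  "sync_then_sends S k t \<longleftrightarrow>
     (\<forall>i j. \<exists>ms ys. filter (on_channel S i j) t = sync_word ms @ map Send ys \<and> length ys \<le> k)"

lemma sync_then_sends_0_iff:
  "sync_then_sends S 0 t \<longleftrightarrow> (\<forall>i j. \<exists>ms. filter (on_channel S i j) t = sync_word ms)"
  by (simp add: sync_then_sends_def)

lemma sync_then_sends_mono: "sync_then_sends S k t \<Longrightarrow> k \<le> k' \<Longrightarrow> sync_then_sends S k' t"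
  unfolding sync_then_sends_def by (meson order_trans)

lemma chan_run_map_Send: "chan_run q (map Send ys) = Some (q @ ys)"
  by (induction ys arbitrary: q) auto

lemma chan_run_sync_word: "chan_run [] (sync_word ms @ t) = chan_run [] t"
  by (induction ms) auto

lemma prefix_sync_then_sends_bounded:
  assumes "prefix p (sync_word ms @ map Send ys)" "length ys \<le> k" "1 \<le> k"
  shows "prefix (recvs p) (sends p) \<and> length (sends p) \<le> length (recvs p) + k"
  using assms(1)
proof (induction ms arbitrary: p)
  case Nil
  then obtain xs where "prefix xs ys" "p = map Send xs"
    using prefix_map_rightE by force
  then show ?case
    using assms(2) prefix_length_le by fastforce
next
  case (Cons m ms)
  then have "p = [] \<or> p = [Send m] \<or> (\<exists>p'. p = Send m # Recv m # p' \<and> prefix p' (sync_word ms @ map Send ys))"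
    by (auto simp: prefix_Cons)
  then show ?case
    using Cons.IH assms(3) by auto
qed

lemma kfifo_if_sync_then_sends:
  assumes "sync_then_sends S k t" "1 \<le> k"
  shows "kfifo S k t"
  unfolding kfifo_def
proof (intro allI impI ballI)
  fix t' i j
  assume "prefix t' t"
  obtain ms ys where t: "filter (on_channel S i j) t = sync_word ms @ map Send ys" "length ys \<le> k"
    using assms(1) unfolding sync_then_sends_def by blast
  have "prefix (filter (on_channel S i j) t') (sync_word ms @ map Send ys)"
    using filter_mono_prefix[OF \<open>prefix t' t\<close>] t(1) by metis
  from prefix_sync_then_sends_bounded[OF this t(2) assms(2)]
  show "\<exists>w. buf S i j t' = Some w \<and> length w \<le> k"
    by (simp add: buf_def sent_on_def recv_on_def sends_filter_on_channel recvs_filter_on_channel)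
      linarith
qed

lemma run_c0_if_sync_then_sends:
  assumes "\<forall>act\<in>set t. msg_of act \<in> msgs S" "sync_then_sends S k t"
    and "\<forall>i. q i \<in> local_states S i t"
  shows "run S (c0 S) t (q, \<lambda>i j. the (chan_run [] (filter (on_channel S i j) t)))"
proof -
  have "chan_run [] (filter (on_channel S i j) t) \<noteq> None" for i j
    using assms(2) unfolding sync_then_sends_def
    by (metis chan_run_sync_word chan_run_map_Send option.distinct(1))
  then show ?thesis
    using assms(1,3) by (auto simp: run_c0_iff)
qed

lemma T_if_sync_then_sends:
  assumes "\<forall>act\<in>set t. msg_of act \<in> msgs S" "sync_then_sends S k t" "1 \<le> k"
    and "\<forall>i. local_states S i t \<noteq> {}"
  shows "t \<in> T S k"
proof -
  have "\<forall>i. \<exists>st. st \<in> local_states S i t"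
    using assms(4) by blast
  then obtain q where "\<forall>i. q i \<in> local_states S i t"
    by metis
  with assms(1,2) have "executable S t"
    unfolding executable_def by (blast intro: run_c0_if_sync_then_sends)
  with kfifo_if_sync_then_sends[OF assms(2,3)] assms(3) show ?thesis
    by (simp add: T_def executable_def)
qed

lemma run_c0_stable_if_sync:
  assumes "\<forall>act\<in>set t. msg_of act \<in> msgs S" "sync_then_sends S 0 t"
    and "\<forall>i. q i \<in> local_states S i t"
  shows "run S (c0 S) t (q, \<lambda>i j. [])" "t \<in> T S 1"
proof -
  have "chan_run [] (filter (on_channel S i j) t) = Some []" for i j
  proof -
    obtain ms where "filter (on_channel S i j) t = sync_word ms"
      using assms(2) by (auto simp: sync_then_sends_0_iff)
    then show ?thesis
      using chan_run_sync_word[of ms "[]"] by simp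
  qed
  with run_c0_if_sync_then_sends[OF assms] show "run S (c0 S) t (q, \<lambda>i j. [])"
    by simp
  show "t \<in> T S 1"
    using assms sync_then_sends_mono[OF assms(2)] by (intro T_if_sync_then_sends) auto
qed

section \<open>Synchronizing sends\<close>

lemma one_synchronizable_sync_word:
  assumes "one_synchronizable S" "t \<in> T S 1"
  shows "executable S (sync_word (sends t))"
proof -
  have "Inl (sends t) \<in> ST S 0"
    using assms by (auto simp: ST_def one_synchronizable_def)
  then obtain t0 where "sends t = sends t0" "t0 \<in> T S 0"
    unfolding ST_def by blast
  then show ?thesis
    by (metis T0_sync_word T_executable)
qed

lemma one_synchronizable_stable_run:
  assumes "one_synchronizable S" "t \<in> T S 1" "run S (c0 S) t c" "stable c"
  shows "run S (c0 S) (sync_word (sends t)) c"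
proof -
  have "Inr (sends t, c) \<in> ST S 0"
    using assms unfolding ST_def one_synchronizable_def by blast
  then obtain t0 where "sends t = sends t0" "t0 \<in> T S 0" "run S (c0 S) t0 c"
    unfolding ST_def by blast
  then show ?thesis
    by (metis T0_sync_word)
qed

lemma one_synchronizable_local_states:
  assumes "one_synchronizable S" "\<forall>act\<in>set t. msg_of act \<in> msgs S" "sync_then_sends S 0 t"
    and "\<forall>i. q i \<in> local_states S i t"
  shows "\<forall>i. q i \<in> local_states S i (sync_word (sends t))"
proof -
  have "run S (c0 S) (sync_word (sends t)) (q, \<lambda>i j. [])"
    using run_c0_stable_if_sync[OF assms(2-)] one_synchronizable_stable_run[OF assms(1)]
    by (simp add: stable_def)
  then show ?thesis
    by (simp add: run_c0_iff)
qed

lemma wf_src_neq_dst: "wf_sys S \<Longrightarrow> a \<in> msgs S \<Longrightarrow> src S a \<noteq> dst S a"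
  by (auto simp: wf_sys_def)

lemma local_states_appendD: "local_states S i (t1 @ t2) \<noteq> {} \<Longrightarrow> local_states S i t1 \<noteq> {}"
  by (auto simp: local_states_def peer_run_append)

lemma local_states_cong:
  "peer_trace S i t = peer_trace S i t' \<Longrightarrow> local_states S i t = local_states S i t'"
  by (simp add: local_states_def)

lemma peer_trace_sync_word_sender:
  "\<forall>p\<in>set ps. src S p = i \<and> dst S p \<noteq> i \<Longrightarrow> peer_trace S i (sync_word ps) = map Send ps"
  by (induction ps) auto

lemma peer_trace_sync_word_receiver:
  "\<forall>v\<in>set vs. dst S v \<noteq> i \<Longrightarrow> peer_trace S i (sync_word vs) = peer_trace S i (map Send vs)"
  by (induction vs) auto

lemma sync_then_sends_interleaved:
  assumes "length vs \<le> k" "length qs \<le> k" "\<forall>v\<in>set vs. \<forall>p\<in>set (ps @ qs). src S v \<noteq> src S p"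
  shows "sync_then_sends S k (sync_word us @ map Send vs @ sync_word ps @ map Send qs)"
  unfolding sync_then_sends_def
proof (intro allI)
  fix i j
  let ?F = "filter (\<lambda>m. src S m = i \<and> dst S m = j)"
  have len: "length (?F vs) \<le> k" "length (?F qs) \<le> k"
    using assms(1,2) by (auto intro: order_trans[OF length_filter_le])
  consider "?F vs = []" | "?F ps = []" "?F qs = []"
  proof (cases "\<exists>v\<in>set vs. src S v = i")
    case True
    with assms(3) have "?F ps = []" "?F qs = []"
      unfolding filter_empty_conv set_append by blast+
    then show ?thesis
      using that by blast
  next
    case False
    then have "?F vs = []"
      unfolding filter_empty_conv by blast
    then show ?thesis
      using that by blast
  qed
  then show "\<exists>ms ys. filter (on_channel S i j) (sync_word us @ map Send vs @ sync_word ps @ map Send qs) =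
      sync_word ms @ map Send ys \<and> length ys \<le> k"
  proof cases
    case 1
    with len(2) show ?thesis
      by - (rule exI[of _ "?F us @ ?F ps"], rule exI[of _ "?F qs"],
          simp add: filter_on_channel_sync_word filter_on_channel_map_Send)
  next
    case 2
    with len(1) show ?thesis
      by - (rule exI[of _ "?F us"], rule exI[of _ "?F vs"],
          simp add: filter_on_channel_sync_word filter_on_channel_map_Send)
  qed
qed

text \<open>The message in \<open>vs\<close>, if any, is still in transit to \<open>P\<close> while \<open>P\<close> sends \<open>ps\<close>;
  the resulting trace is 1-bounded, and 1-synchronizability moves the receipt in front.\<close>

lemma executable_append_sync_sends:
  assumes wf: "wf_sys S" and os: "one_synchronizable S"
    and vs: "length vs \<le> 1" "\<forall>v\<in>set vs. dst S v = P"
    and ex: "executable S (sync_word us @ sync_word vs)"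
    and ps: "set ps \<subseteq> msgs S" "\<forall>p\<in>set ps. src S p = P"
    and P: "local_states S P (sync_word us @ map Send ps) \<noteq> {}"
  shows "executable S (sync_word us @ sync_word vs @ sync_word ps)"
  using ps P
proof (induction ps rule: rev_induct)
  case Nil
  then show ?case
    using ex by simp
next
  case (snoc p ps)
  have IH: "executable S (sync_word us @ sync_word vs @ sync_word ps)"
    using snoc local_states_appendD[of S P "sync_word us @ map Send ps"] by simp
  have us_vs: "set us \<subseteq> msgs S" "set vs \<subseteq> msgs S"
    using executable_msgs[OF ex] by (simp_all add: ball_Un subset_iff)
  have ps_P: "\<forall>p'\<in>set (ps @ [p]). src S p' = P \<and> dst S p' \<noteq> P"
    using snoc.prems(1,2) wf_src_neq_dst[OF wf] by fastforce
  have vs_P: "\<forall>v\<in>set vs. src S v \<noteq> P"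
    using vs(2) us_vs(2) wf_src_neq_dst[OF wf] by fastforce
  define t where "t = sync_word us @ map Send vs @ sync_word ps @ [Send p]"
  have "t \<in> T S 1"
  proof (rule T_if_sync_then_sends)
    show "\<forall>act\<in>set t. msg_of act \<in> msgs S"
      using us_vs snoc.prems(1) by (auto simp: t_def)
    from vs(1) vs_P ps_P show "sync_then_sends S 1 t"
      unfolding t_def by (intro sync_then_sends_interleaved[where qs = "[p]", simplified]) auto
    have "local_states S i t \<noteq> {}" for i
    proof (cases "i = P")
      case True
      have "peer_trace S P t = peer_trace S P (sync_word us @ map Send (ps @ [p]))"
        using vs_P ps_P
        by (simp add: t_def peer_trace_map_Send peer_trace_sync_word_sender filter_empty_conv)
      with True snoc.prems(3) show ?thesis
        by (simp add: local_states_def)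
    next
      case False
      with vs(2) ps_P have "peer_trace S i t = peer_trace S i (sync_word us @ sync_word vs @ sync_word ps)"
        by (simp add: t_def peer_trace_sync_word_receiver)
      with executable_local_states[OF IH, of i] show ?thesis
        by (simp add: local_states_def)
    qed
    then show "\<forall>i. local_states S i t \<noteq> {}" ..
  qed simp
  then have "executable S (sync_word (sends t))"
    by (rule one_synchronizable_sync_word[OF os])
  then show ?case
    by (simp add: t_def)
qed

lemma local_states_after_receive:
  assumes wf: "wf_sys S" and os: "one_synchronizable S"
    and ex: "executable S (sync_word us @ sync_word [y])" and y: "dst S y = P"
    and xs: "set xs \<subseteq> msgs S"
    and P: "local_states S P (sync_word us @ map Send xs) \<noteq> {}"
  shows "local_states S P (sync_word us @ sync_word [y] @ map Send xs) \<noteq> {}"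
proof -
  define ps where "ps = filter (\<lambda>m. src S m = P) xs"
  have "\<forall>p\<in>set ps. p \<in> msgs S \<and> src S p = P"
    using xs by (auto simp: ps_def)
  then have ps_P: "\<forall>p\<in>set ps. src S p = P \<and> dst S p \<noteq> P"
    using wf_src_neq_dst[OF wf] by metis
  have "src S y \<noteq> P"
    using executable_msgs[OF ex] wf_src_neq_dst[OF wf] y by auto
  have "local_states S P (sync_word us @ map Send ps) = local_states S P (sync_word us @ map Send xs)"
    by (intro local_states_cong) (simp add: ps_def peer_trace_map_Send)
  with P ps_P xs have "executable S (sync_word us @ sync_word [y] @ sync_word ps)"
    by (intro executable_append_sync_sends[OF wf os _ _ ex]) (auto simp: y ps_def)
  moreover have "local_states S P (sync_word us @ sync_word [y] @ sync_word ps) =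
      local_states S P (sync_word us @ sync_word [y] @ map Send xs)"
    using \<open>src S y \<noteq> P\<close> peer_trace_sync_word_sender[OF ps_P]
    by (intro local_states_cong) (simp add: y ps_def peer_trace_map_Send)
  ultimately show ?thesis
    using executable_local_states by metis
qed

lemma local_states_sender_after_sync:
  assumes wf: "wf_sys S" and os: "one_synchronizable S"
    and ex: "executable S (sync_word us @ sync_word s1)"
    and msgs: "set s1 \<subseteq> msgs S" "set s2 \<subseteq> msgs S"
    and P: "local_states S P (sync_word us @ map Send (s1 @ s2)) \<noteq> {}"
  shows "local_states S P (sync_word us @ sync_word s1 @ map Send s2) \<noteq> {}"
  using ex msgs(1) P
proof (induction s1 arbitrary: us)
  case Nil
  then show ?case
    by simp
next
  case (Cons y s1)
  have "local_states S P (sync_word (us @ [y]) @ map Send (s1 @ s2)) \<noteq> {}"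
  proof (cases "dst S y = P")
    case False
    then have "peer_trace S P (sync_word (us @ [y]) @ map Send (s1 @ s2)) =
        peer_trace S P (sync_word us @ map Send (y # s1 @ s2))"
      by simp
    with Cons.prems(3) show ?thesis
      by (simp add: local_states_def)
  next
    case True
    with Cons.prems(2) wf_src_neq_dst[OF wf] have "src S y \<noteq> P"
      by auto
    then have "peer_trace S P (sync_word us @ map Send (s1 @ s2)) =
        peer_trace S P (sync_word us @ map Send (y # s1 @ s2))"
      by simp
    with Cons.prems(3) have "local_states S P (sync_word us @ map Send (s1 @ s2)) \<noteq> {}"
      by (simp add: local_states_def)
    moreover have "executable S (sync_word us @ sync_word [y])"
      using Cons.prems(1) executable_appendD[of S "sync_word us @ sync_word [y]" "sync_word s1"]
      by simp
    ultimately show ?thesis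
      using local_states_after_receive[OF wf os _ True, of us "s1 @ s2"] Cons.prems(2) msgs(2)
      by simp
  qed
  with Cons.IH[of "us @ [y]"] Cons.prems show ?case
    by simp
qed

lemma executable_sync_word_of_sends:
  assumes wf: "wf_sys S" and os: "one_synchronizable S"
    and "executable S (sync_word us @ map Send s)"
  shows "executable S (sync_word us @ sync_word s)"
  using assms(3)
proof (induction s rule: rev_induct)
  case Nil
  then show ?case
    by simp
next
  case (snoc x s)
  have IH: "executable S (sync_word us @ sync_word s)"
    using snoc executable_appendD[of S "sync_word us @ map Send s" "[Send x]"] by simp
  have msgs: "set s \<subseteq> msgs S" "set [x] \<subseteq> msgs S"
    using executable_msgs[OF snoc.prems] by (simp_all add: ball_Un subset_iff)
  have "local_states S (src S x) (sync_word us @ map Send (s @ [x])) \<noteq> {}"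
    using executable_local_states[OF snoc.prems] by simp
  then have "local_states S (src S x) (sync_word (us @ s) @ map Send [x]) \<noteq> {}"
    using local_states_sender_after_sync[OF wf os IH msgs] by simp
  then have "executable S (sync_word (us @ s) @ sync_word [] @ sync_word [x])"
    using IH msgs by (intro executable_append_sync_sends[OF wf os]) auto
  then show ?case
    by simp
qed

section \<open>Interleaving exchanges of disjoint senders\<close>

lemma in_shuffles_disjoint_iff:
  assumes "set xs \<inter> set ys = {}"
  shows "zs \<in> shuffles xs ys \<longleftrightarrow>
    filter (\<lambda>x. x \<in> set xs) zs = xs \<and> filter (\<lambda>x. x \<notin> set xs) zs = ys"
  using filter_shuffles_disjoint1[OF assms] partition_in_shuffles[of zs "\<lambda>x. x \<in> set xs"] by metis

lemma append_in_shuffles: "xs @ ys \<in> shuffles xs ys"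
  by (induction xs) (auto intro: Cons_in_shuffles_leftI)

lemma in_shuffles_concat_map:
  assumes "\<forall>x\<in>set xs \<union> set ys. length (f x) \<le> 1"
    and "zs \<in> shuffles (concat (map f xs)) (concat (map f ys))"
  shows "\<exists>ws\<in>shuffles xs ys. concat (map f ws) = zs"
  using assms
proof (induction xs ys arbitrary: zs rule: shuffles.induct)
  case (3 x xs y ys)
  consider "f x = []" | "f y = []" | u v where "f x = [u]" "f y = [v]"
    using "3.prems"(1) by (cases "f x"; cases "f y") auto
  then show ?case
  proof cases
    case 1
    with "3.IH"(1)[of zs] "3.prems" obtain ws where "ws \<in> shuffles xs (y # ys)" "concat (map f ws) = zs"
      by auto
    with 1 show ?thesis
      by (intro bexI[of _ "x # ws"]) (auto intro: Cons_in_shuffles_leftI)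
  next
    case 2
    with "3.IH"(2)[of zs] "3.prems" obtain ws where "ws \<in> shuffles (x # xs) ys" "concat (map f ws) = zs"
      by auto
    with 2 show ?thesis
      by (intro bexI[of _ "y # ws"]) (auto intro: Cons_in_shuffles_rightI)
  next
    case 3
    with "3.prems"(2) obtain c zs' where zs: "zs = c # zs'"
      and "c = u \<and> zs' \<in> shuffles (concat (map f xs)) (concat (map f (y # ys))) \<or>
           c = v \<and> zs' \<in> shuffles (concat (map f (x # xs))) (concat (map f ys))"
      by (cases zs) (auto simp: Cons_in_shuffles_iff)
    then show ?thesis
    proof (elim disjE conjE)
      assume "c = u" "zs' \<in> shuffles (concat (map f xs)) (concat (map f (y # ys)))"
      with "3.IH"(1)[of zs'] "3.prems"(1) obtain ws where "ws \<in> shuffles xs (y # ys)" "concat (map f ws) = zs'"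
        by auto
      with 3 zs \<open>c = u\<close> show ?thesis
        by (intro bexI[of _ "x # ws"]) (auto intro: Cons_in_shuffles_leftI)
    next
      assume "c = v" "zs' \<in> shuffles (concat (map f (x # xs))) (concat (map f ys))"
      with "3.IH"(2)[of zs'] "3.prems"(1) obtain ws where "ws \<in> shuffles (x # xs) ys" "concat (map f ws) = zs'"
        by auto
      with 3 zs \<open>c = v\<close> show ?thesis
        by (intro bexI[of _ "y # ws"]) (auto intro: Cons_in_shuffles_rightI)
    qed
  qed
qed auto

lemma peer_trace_sync_word:
  "peer_trace S i (sync_word ms) = concat (map (\<lambda>m. peer_trace S i [Send m, Recv m]) ms)"
  by (induction ms) auto

locale disjoint_senders =
  fixes S :: "('m, 's) sys" and tau :: "'m action list" and as bs :: "'m list"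
  assumes wf: "wf_sys S" and os: "one_synchronizable S" and tau: "tau \<in> T S 0"
    and executable_as: "executable S (tau @ map Send as)"
    and executable_bs: "executable S (tau @ map Send bs)"
    and disjoint: "\<forall>a\<in>set as. \<forall>b\<in>set bs. src S a \<noteq> src S b"
begin

lemma disjoint_senders_swap: "disjoint_senders S tau bs as"
  using wf os tau executable_as executable_bs disjoint by unfold_locales metis+

lemma tau_sync_word: "tau = sync_word (sends tau)"
  using T0_sync_word[OF tau] .

lemma disjoint_sets: "set as \<inter> set bs = {}"
  using disjoint by auto

lemma msgs_as_bs: "set as \<subseteq> msgs S" "set bs \<subseteq> msgs S"
  using executable_msgs[OF executable_as] executable_msgs[OF executable_bs]
  by (simp_all add: ball_Un subset_iff)

lemma executable_send_shuffle:
  assumes "zs \<in> shuffles as bs"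
  shows "executable S (tau @ map Send zs)"
proof -
  let ?t = "tau @ map Send zs"
  have "\<forall>act\<in>set ?t. msg_of act \<in> msgs S"
    using executable_msgs[OF executable_as] msgs_as_bs set_shuffles[OF assms] by auto
  moreover have "sync_then_sends S (length zs) ?t"
    unfolding sync_then_sends_def
    by (subst tau_sync_word)
      (auto simp: filter_on_channel_sync_word filter_on_channel_map_Send intro!: exI)
  moreover have "local_states S i ?t \<noteq> {}" for i
  proof -
    let ?Fi = "filter (\<lambda>m. src S m = i)"
    have zs_i: "?Fi zs \<in> shuffles (?Fi as) (?Fi bs)"
      using assms filter_shuffles[of "\<lambda>m. src S m = i" as bs] by blast
    consider "?Fi bs = []" | "?Fi as = []"
      using disjoint by (auto simp: filter_empty_conv)
    then show ?thesis
    proof cases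
      case 1
      with zs_i have "local_states S i ?t = local_states S i (tau @ map Send as)"
        by (intro local_states_cong) (simp add: peer_trace_map_Send)
      then show ?thesis
        using executable_local_states[OF executable_as] by simp
    next
      case 2
      with zs_i have "local_states S i ?t = local_states S i (tau @ map Send bs)"
        by (intro local_states_cong) (simp add: peer_trace_map_Send)
      then show ?thesis
        using executable_local_states[OF executable_bs] by simp
    qed
  qed
  ultimately have "?t \<in> T S (Suc (length zs))"
    by (intro T_if_sync_then_sends) (auto elim: sync_then_sends_mono)
  then show ?thesis
    by (rule T_executable)
qed

lemma executable_sync_shuffle: "zs \<in> shuffles as bs \<Longrightarrow> executable S (tau @ sync_word zs)"
  using executable_sync_word_of_sends[OF wf os, of "sends tau" zs] executable_send_shuffle
  by (simp flip: tau_sync_word)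

abbreviation states_after :: "nat \<Rightarrow> 'm list \<Rightarrow> 's set" where
  "states_after i s \<equiv> local_states S i (tau @ sync_word s)"

text \<open>Delaying the receipt of \<open>b\<close> past the exchange of \<open>a\<close> lets peer \<open>i\<close> follow
  the order \<open>a, b\<close> while everybody else follows \<open>b, a\<close>.\<close>

lemma states_after_swap:
  assumes i: "\<forall>b\<in>set bs. src S b \<noteq> i"
    and sh: "s1 @ [b, a] @ s2 \<in> shuffles as bs" and a: "a \<in> set as" and b: "b \<in> set bs"
  shows "states_after i (s1 @ [a, b] @ s2) \<subseteq> states_after i (s1 @ [b, a] @ s2)"
proof (cases "dst S b = i")
  case False
  with i b show ?thesis
    by (simp add: local_states_def)
next
  case True
  have src_ab: "src S a \<noteq> src S b" "src S b \<noteq> i"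
    using disjoint i a b by auto
  show ?thesis
  proof
    fix st
    assume st: "st \<in> states_after i (s1 @ [a, b] @ s2)"
    obtain qb wb where rb: "run S (c0 S) (tau @ sync_word (s1 @ [b, a] @ s2)) (qb, wb)"
      using executable_sync_shuffle[OF sh] by (auto simp: executable_def)
    define t where "t = tau @ sync_word s1 @ [Send b, Send a, Recv a, Recv b] @ sync_word s2"
    have sync_t: "sync_word (sends t) = tau @ sync_word (s1 @ [b, a] @ s2)"
      unfolding t_def by (subst (2) tau_sync_word) simp
    have "\<forall>act\<in>set t. msg_of act \<in> msgs S"
      using rb unfolding run_c0_iff t_def by auto
    moreover have "filter (on_channel S k l) t = filter (on_channel S k l) (sync_word (sends t))" for k l
      unfolding sync_t using src_ab(1) by (auto simp: t_def)
    then have "sync_then_sends S 0 t"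
      unfolding sync_then_sends_0_iff filter_on_channel_sync_word by metis
    moreover have "(qb(i := st)) j \<in> local_states S j t" for j
    proof (cases "j = i")
      case True
      with st src_ab(2) \<open>dst S b = i\<close> show ?thesis
        by (auto simp: t_def local_states_def)
    next
      case False
      then have "local_states S j t = local_states S j (tau @ sync_word (s1 @ [b, a] @ s2))"
        using \<open>dst S b = i\<close> by (intro local_states_cong) (auto simp: t_def)
      with False rb show ?thesis
        by (simp add: run_c0_iff)
    qed
    ultimately have "(qb(i := st)) i \<in> local_states S i (sync_word (sends t))"
      using one_synchronizable_local_states[OF os] by blast
    with sync_t show "st \<in> states_after i (s1 @ [b, a] @ s2)"
      by simp
  qed
qed

lemma states_after_move_left:
  assumes i: "\<forall>b\<in>set bs. src S b \<noteq> i"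
    and "set xs \<subseteq> set as" "m \<notin> set as" "u @ xs @ [m] @ v \<in> shuffles as bs"
  shows "states_after i (u @ xs @ [m] @ v) \<subseteq> states_after i (u @ [m] @ xs @ v)"
  using assms(2-)
proof (induction xs arbitrary: u)
  case (Cons x xs)
  have m: "m \<in> set bs"
    using Cons.prems set_shuffles[OF Cons.prems(3)] by auto
  have x: "x \<in> set as"
    using Cons.prems by simp
  have "states_after i (u @ (x # xs) @ [m] @ v) \<subseteq> states_after i ((u @ [x]) @ [m] @ xs @ v)"
    using Cons.IH[of "u @ [x]"] Cons.prems by simp
  also have "\<dots> \<subseteq> states_after i (u @ [m, x] @ xs @ v)"
  proof -
    have "filter (\<lambda>y. y \<in> set as) (u @ (x # xs) @ [m] @ v) = as"
         "filter (\<lambda>y. y \<notin> set as) (u @ (x # xs) @ [m] @ v) = bs"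
      using Cons.prems(3) in_shuffles_disjoint_iff[OF disjoint_sets] by blast+
    moreover have "filter (\<lambda>y. y \<notin> set as) xs = []" "filter (\<lambda>y. y \<in> set as) xs = xs"
      using Cons.prems(1) by (auto simp: filter_empty_conv filter_id_conv)
    ultimately have "u @ [m, x] @ xs @ v \<in> shuffles as bs"
      using Cons.prems(2) x in_shuffles_disjoint_iff[OF disjoint_sets] by auto
    then show ?thesis
      using states_after_swap[OF i _ x m, of u "xs @ v"] by simp
  qed
  finally show ?case
    by simp
qed simp

lemma states_after_sort:
  assumes i: "\<forall>b\<in>set bs. src S b \<noteq> i"
  shows "u @ s \<in> shuffles as bs \<Longrightarrow>
    states_after i (u @ filter (\<lambda>m. m \<in> set as) s @ filter (\<lambda>m. m \<notin> set as) s) \<subseteq> states_after i (u @ s)"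
proof (induction s arbitrary: u)
  case (Cons m s)
  show ?case
  proof (cases "m \<in> set as")
    case True
    then show ?thesis
      using Cons.IH[of "u @ [m]"] Cons.prems by simp
  next
    case False
    let ?xs = "filter (\<lambda>m. m \<in> set as) s" and ?v = "filter (\<lambda>m. m \<notin> set as) s"
    have "filter (\<lambda>m. m \<in> set as) (u @ m # s) = as" "filter (\<lambda>m. m \<notin> set as) (u @ m # s) = bs"
      using Cons.prems in_shuffles_disjoint_iff[OF disjoint_sets] by blast+
    with False have "u @ ?xs @ [m] @ ?v \<in> shuffles as bs"
      using in_shuffles_disjoint_iff[OF disjoint_sets] by auto
    with False have "states_after i (u @ ?xs @ [m] @ ?v) \<subseteq> states_after i (u @ [m] @ ?xs @ ?v)"
      by (intro states_after_move_left[OF i]) auto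
    also have "\<dots> \<subseteq> states_after i (u @ [m] @ s)"
      using Cons.IH[of "u @ [m]"] Cons.prems by simp
    finally show ?thesis
      using False by simp
  qed
qed simp

lemma states_after_append_subset:
  assumes "\<forall>b\<in>set bs. src S b \<noteq> i" "s \<in> shuffles as bs"
  shows "states_after i (as @ bs) \<subseteq> states_after i s"
  using states_after_sort[OF assms(1), of "[]" s] assms(2) filter_shuffles_disjoint1[OF disjoint_sets]
  by simp

lemma states_after_subset_sync_shuffle:
  assumes i: "\<forall>b\<in>set bs. src S b \<noteq> i" and xi: "xi \<in> shuffles (sync_word as) (sync_word bs)"
  shows "states_after i (as @ bs) \<subseteq> local_states S i (tau @ xi)"
proof -
  let ?f = "\<lambda>m. peer_trace S i [Send m, Recv m]"
  have "peer_trace S i xi \<in> shuffles (peer_trace S i (sync_word as)) (peer_trace S i (sync_word bs))"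
    using xi filter_shuffles[of "\<lambda>act. peer_of S act = i" "sync_word as" "sync_word bs"]
    unfolding peer_trace_def by blast
  moreover have "\<forall>m\<in>set as \<union> set bs. length (?f m) \<le> 1"
    using msgs_as_bs wf_src_neq_dst[OF wf] by auto
  ultimately obtain s where "s \<in> shuffles as bs" "concat (map ?f s) = peer_trace S i xi"
    using in_shuffles_concat_map[of as bs ?f] by (auto simp: peer_trace_sync_word)
  moreover from this(2) have "local_states S i (tau @ xi) = states_after i s"
    by (intro local_states_cong) (simp add: peer_trace_sync_word)
  ultimately show ?thesis
    using states_after_append_subset[OF i] by simp
qed

lemma common_local_state:
  "\<exists>st. \<forall>xi\<in>shuffles (sync_word as) (sync_word bs). st \<in> local_states S i (tau @ xi)"
proof (cases "\<forall>b\<in>set bs. src S b \<noteq> i")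
  case True
  obtain st where "st \<in> states_after i (as @ bs)"
    using executable_local_states[OF executable_sync_shuffle[OF append_in_shuffles]] by blast
  with states_after_subset_sync_shuffle[OF True] show ?thesis
    by blast
next
  case False
  interpret swapped: disjoint_senders S tau bs as
    by (rule disjoint_senders_swap)
  from False have "\<forall>a\<in>set as. src S a \<noteq> i"
    using disjoint by auto
  obtain st where "st \<in> states_after i (bs @ as)"
    using executable_local_states[OF swapped.executable_sync_shuffle[OF append_in_shuffles]] by blast
  with swapped.states_after_subset_sync_shuffle[OF \<open>\<forall>a\<in>set as. src S a \<noteq> i\<close>] show ?thesis
    by (auto simp: shuffles_commutes)
qed

lemma sync_then_sends_sync_shuffle:
  assumes "xi \<in> shuffles (sync_word as) (sync_word bs)"
  shows "sync_then_sends S 0 (tau @ xi)"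
  unfolding sync_then_sends_0_iff
proof (intro allI)
  fix i j
  let ?F = "filter (\<lambda>m. src S m = i \<and> dst S m = j)"
  have "filter (on_channel S i j) xi \<in> shuffles (sync_word (?F as)) (sync_word (?F bs))"
    using assms filter_shuffles[of "on_channel S i j" "sync_word as" "sync_word bs"]
    by (auto simp: filter_on_channel_sync_word)
  moreover have "?F as = [] \<or> ?F bs = []"
    using disjoint by (auto simp: filter_empty_conv)
  ultimately obtain ms where "filter (on_channel S i j) xi = sync_word ms"
    by auto
  then have "filter (on_channel S i j) (tau @ xi) = sync_word (?F (sends tau) @ ms)"
    by (subst tau_sync_word) (simp add: filter_on_channel_sync_word)
  then show "\<exists>ms. filter (on_channel S i j) (tau @ xi) = sync_word ms" ..
qed

lemma sync_shuffles_reach_common_stable: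
  "\<exists>q. \<forall>xi\<in>shuffles (sync_word as) (sync_word bs).
     run S (c0 S) (tau @ xi) (q, \<lambda>i j. []) \<and> tau @ xi \<in> T S 1"
proof -
  obtain q where q: "\<forall>i. \<forall>xi\<in>shuffles (sync_word as) (sync_word bs). q i \<in> local_states S i (tau @ xi)"
    using common_local_state by metis
  have "run S (c0 S) (tau @ xi) (q, \<lambda>i j. []) \<and> tau @ xi \<in> T S 1"
    if xi: "xi \<in> shuffles (sync_word as) (sync_word bs)" for xi
  proof -
    have "\<forall>act\<in>set (tau @ xi). msg_of act \<in> msgs S"
      using executable_msgs[OF executable_as] msgs_as_bs set_shuffles[OF xi] by auto
    with sync_then_sends_sync_shuffle[OF xi] q xi show ?thesis
      using run_c0_stable_if_sync by blast
  qed
  then show ?thesis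
    by blast
qed

end

theorem lemma4p9:
  fixes S :: "('m, 's) sys" and as bs :: "'m list" and tau xi1 xi2 :: "'m action list"
  assumes "wf_sys S"
    and "one_synchronizable S"
    and "set as \<subseteq> msgs S" and "set bs \<subseteq> msgs S"
    and "tau \<in> T S 0"
    and "tau @ map Send as \<in> T S (length as)"
    and "tau @ map Send bs \<in> T S (length bs)"
    and "\<forall>a\<in>set as. \<forall>b\<in>set bs. src S a \<noteq> src S b"
    and "xi1 \<in> shuffles (sync_word as) (sync_word bs)"
    and "xi2 \<in> shuffles (sync_word as) (sync_word bs)"
    and "xi1 \<noteq> xi2"
  shows "tau @ xi1 \<in> T_omega S \<and> tau @ xi2 \<in> T_omega S \<and> trace_equiv S (tau @ xi1) (tau @ xi2)"
proof -
  interpret disjoint_senders S tau as bs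
    using assms(1,2,5-8) by unfold_locales (auto intro: T_executable)
  obtain q where "\<forall>xi\<in>shuffles (sync_word as) (sync_word bs).
      run S (c0 S) (tau @ xi) (q, \<lambda>i j. []) \<and> tau @ xi \<in> T S 1"
    using sync_shuffles_reach_common_stable by blast
  with assms(9,10) show ?thesis
    by (auto simp: trace_equiv_def T_omega_def)
qed

end
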